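(* Let $G=(V,E)$ be an acyclic finite directed graph, $\Gamma\subset V$ containing all sinks and sources with $V\setminus\Gamma\ne\emptyset$. Let $z=(z_v)_{v\in\Gamma}$ with each $z_v$ a real diagonal $d\times d$ matrix, and for $1\le i\le d$ let $z(i,i)=(z_v(i,i))_{v\in\Gamma}\in\mathbb R^\Gamma$. Then, for each $i$, $\chi_1$ has a unique minimiser $m(i,i)=(m_v(i,i))_{v\in V}$ on $\mathbb R^V(z(i,i))$, and $\chi_d$ has a unique minimiser on $\mathrm{Sym}_d^V(z)$, namely the array $m=(m_v)_{v\in V}$ of diagonal matrices with diagonal entries $m_v(i,i)$, $1\le i\le d$.
   Context: $v\to w$ denotes an edge $(v,w)\in E$; a sink has no outgoing edges, a source no incoming edges. $\mathrm{Sym}_d$: $d\times d$ real symmetric matrices ($\mathrm{Sym}_1=\mathbb R$). For $z\in\mathrm{Sym}_d^\Gamma$, $\mathrm{Sym}_d^V(z)=\{x=(x_v)_{v\in V}\in\mathrm{Sym}_d^V:x_v=z_v\ \forall v\in\Gamma\}$. $\chi_d(x)=\sum_{v\to w}\operatorname{tr}[e^{x_v-x_w}]$ (matrix exponential); $\chi_1(x)=\sum_{v\to w}e^{x_v-x_w}$ on $\mathbb R^V$. *)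

theory Defs
  imports "HOL-Analysis.Analysis"
begin

definition mat_pow :: "real^'n^'n \<Rightarrow> nat \<Rightarrow> real^'n^'n" where
  "mat_pow A k = ((\<lambda>B. A ** B) ^^ k) (mat 1)"

definition mat_exp :: "real^'n^'n \<Rightarrow> real^'n^'n" where
  "mat_exp A = (\<chi> i j. (\<Sum>k. (mat_pow A k $ i $ j) / fact k))"

definition sym_mat :: "real^'n^'n \<Rightarrow> bool" where
  "sym_mat A \<longleftrightarrow> transpose A = A"

definition diag_mat :: "real^'n^'n \<Rightarrow> bool" where
  "diag_mat A \<longleftrightarrow> (\<forall>i j. i \<noteq> j \<longrightarrow> A $ i $ j = 0)"

definition is_sink :: "'v set \<Rightarrow> ('v \<times> 'v) set \<Rightarrow> 'v \<Rightarrow> bool" where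
  "is_sink V E v \<longleftrightarrow> v \<in> V \<and> (\<forall>w. (v, w) \<notin> E)"

definition is_source :: "'v set \<Rightarrow> ('v \<times> 'v) set \<Rightarrow> 'v \<Rightarrow> bool" where
  "is_source V E v \<longleftrightarrow> v \<in> V \<and> (\<forall>w. (w, v) \<notin> E)"

definition chi_d :: "('v \<times> 'v) set \<Rightarrow> ('v \<Rightarrow> real^'n^'n) \<Rightarrow> real" where
  "chi_d E x = (\<Sum>(v, w)\<in>E. trace (mat_exp (x v - x w)))"

definition chi_1 :: "('v \<times> 'v) set \<Rightarrow> ('v \<Rightarrow> real) \<Rightarrow> real" where
  "chi_1 E x = (\<Sum>(v, w)\<in>E. exp (x v - x w))"

text \<open>Arrays indexed by V are functions, extended by 0 outside V.\<close>
definition RV :: "'v set \<Rightarrow> 'v set \<Rightarrow> ('v \<Rightarrow> real) \<Rightarrow> ('v \<Rightarrow> real) set" where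
  "RV V \<Gamma> z = {x. (\<forall>v\<in>\<Gamma>. x v = z v) \<and> (\<forall>v. v \<notin> V \<longrightarrow> x v = 0)}"

definition SymV :: "'v set \<Rightarrow> 'v set \<Rightarrow> ('v \<Rightarrow> real^'n^'n) \<Rightarrow> ('v \<Rightarrow> real^'n^'n) set" where
  "SymV V \<Gamma> z = {x. (\<forall>v\<in>V. sym_mat (x v)) \<and> (\<forall>v\<in>\<Gamma>. x v = z v) \<and> (\<forall>v. v \<notin> V \<longrightarrow> x v = 0)}"

definition unique_minimiser :: "('a \<Rightarrow> real) \<Rightarrow> 'a set \<Rightarrow> 'a \<Rightarrow> bool" where
  "unique_minimiser f S m \<longleftrightarrow> m \<in> S \<and> (\<forall>x\<in>S. f m \<le> f x) \<and>
     (\<forall>m'\<in>S. (\<forall>x\<in>S. f m' \<le> f x) \<longrightarrow> m' = m)"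

end

theory Submission
  imports Defs
begin

text \<open>
  For symmetric \<open>C\<close>, expanding in an orthonormal eigenbasis writes \<open>(e\<^sup>C)\<^sub>i\<^sub>i\<close> as a convex
  combination of the exponentials of the eigenvalues whose barycentre is \<open>C\<^sub>i\<^sub>i\<close>. Jensen's inequality
  gives the Peierls inequality \<open>\<Sum>\<^sub>i exp C\<^sub>i\<^sub>i \<le> tr e\<^sup>C\<close>, with equality only if every eigenvector
  supported at \<open>i\<close> has eigenvalue \<open>C\<^sub>i\<^sub>i\<close>, i.e. only if \<open>C\<close> is diagonal. Hence
  \<open>\<chi>\<^sub>d(x) \<ge> \<Sum>\<^sub>i \<chi>\<^sub>1(x(i,i))\<close>, with equality for diagonal arrays.

  The scalar energy \<open>\<chi>\<^sub>1\<close> is coercive on \<open>\<real>\<^sup>V(z)\<close>, because every vertex outside \<open>\<Gamma>\<close> lies on a path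
  from a source to a sink, and it is strictly convex in the edge differences; as the difference of
  two minimisers is then constant along edges and vanishes at the sinks, the minimiser exists and is
  unique. The diagonal array of the scalar minimisers therefore minimises \<open>\<chi>\<^sub>d\<close>. Conversely a
  minimiser of \<open>\<chi>\<^sub>d\<close> attains equality, so all its edge differences are diagonal; propagating from the
  diagonal boundary values it is diagonal, and its diagonal entries are scalar minimisers.
\<close>

section \<open>The exponential function\<close>

lemma exp_tangent_le: "exp c * (1 + (y - c)) \<le> exp (y::real)"
proof -
  have "exp c * (1 + (y - c)) \<le> exp c * exp (y - c)"
    by (intro mult_left_mono) auto
  then show ?thesis by (simp add: exp_diff)
qed

lemma exp_tangent_less:
  fixes y c :: real assumes "y \<noteq> c" shows "exp c * (1 + (y - c)) < exp y"
proof -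
  have "1 + (y - c) < exp (y - c)"
    using exp_minus_greater[of "c - y"] assms by simp
  then have "exp c * (1 + (y - c)) < exp c * exp (y - c)"
    by (intro mult_strict_left_mono) auto
  then show ?thesis by (simp add: exp_diff)
qed

definition exp_tangent_gap :: "real \<Rightarrow> real \<Rightarrow> real" where
  "exp_tangent_gap c y = exp y - exp c * (1 + (y - c))"

lemma exp_tangent_gap_nonneg: "0 \<le> exp_tangent_gap c y"
  using exp_tangent_le[of c y] by (simp add: exp_tangent_gap_def)

lemma exp_tangent_gap_pos: "y \<noteq> c \<Longrightarrow> 0 < exp_tangent_gap c y"
  using exp_tangent_less[of y c] by (simp add: exp_tangent_gap_def)

lemma exp_midpoint_less:
  fixes a b :: real assumes "a \<noteq> b" shows "exp ((a + b) / 2) < (exp a + exp b) / 2"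
proof -
  let ?c = "(a + b) / 2"
  have "2 * exp ?c = exp ?c * (1 + (a - ?c)) + exp ?c * (1 + (b - ?c))"
    by (simp add: algebra_simps)
  also have "\<dots> < exp a + exp b"
    using assms by (intro add_less_le_mono exp_tangent_less exp_tangent_le) simp
  finally show ?thesis by simp
qed

lemma exp_midpoint_le: "exp ((a + b) / 2) \<le> (exp a + exp (b::real)) / 2"
  using exp_midpoint_less[of a b] by (cases "a = b") auto

lemma exp_sums: "(\<lambda>k. x ^ k / fact k) sums exp (x::real)"
  using exp_converges[of x] by (simp add: divide_inverse mult.commute)

section \<open>Eigenbases of symmetric matrices\<close>

lemma quadratic_nonpos_imp_linear_coeff_0:
  fixes a c :: real
  assumes "\<And>t. 2 * t * a + t\<^sup>2 * c \<le> 0"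
  shows "a = 0"
proof (rule ccontr)
  assume "a \<noteq> 0"
  define r where "r = \<bar>c\<bar> + 1"
  have "r > 0" "2 * r + c > 0" unfolding r_def by auto
  have "2 * (a / r) * a + (a / r)\<^sup>2 * c = a\<^sup>2 * (2 * r + c) / r\<^sup>2"
    using \<open>r > 0\<close> by (simp add: field_simps power2_eq_square)
  also have "\<dots> > 0"
    using \<open>a \<noteq> 0\<close> \<open>r > 0\<close> \<open>2 * r + c > 0\<close> by simp
  finally show False using assms[of "a / r"] by linarith
qed

lemma sym_mat_inner_commute:
  fixes C :: "real^'n^'n"
  assumes "sym_mat C" shows "x \<bullet> (C *v y) = (C *v x) \<bullet> y"
  by (metis assms dot_lmul_matrix sym_mat_def vector_transpose_matrix)

lemma rayleigh_bound_homogeneous: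
  fixes C :: "real^'n^'n"
  assumes "subspace S" and bound: "\<And>y. y \<in> S \<Longrightarrow> norm y = 1 \<Longrightarrow> y \<bullet> (C *v y) \<le> l"
    and "y \<in> S"
  shows "y \<bullet> (C *v y) \<le> l * (y \<bullet> y)"
proof (cases "y = 0")
  case False
  then have "y /\<^sub>R norm y \<in> S" "norm (y /\<^sub>R norm y) = 1"
    using assms(1,3) by (auto simp: subspace_scale)
  then have "(y /\<^sub>R norm y) \<bullet> (C *v (y /\<^sub>R norm y)) \<le> l" by (rule bound)
  then have "(y \<bullet> (C *v y)) / (norm y)\<^sup>2 \<le> l"
    by (simp add: matrix_vector_mult_scaleR power2_eq_square divide_inverse mult_ac)
  then show ?thesis
    using False by (simp add: divide_le_eq power2_norm_eq_inner mult.commute)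
qed simp

text \<open>A maximiser \<open>u\<close> of the Rayleigh quotient on an invariant subspace is an eigenvector:
  perturbing \<open>u\<close> to \<open>u + t v\<close> with \<open>v \<perp> u\<close> shows that \<open>C u\<close> has no component orthogonal to \<open>u\<close>.\<close>
lemma rayleigh_maximiser_eigenvector:
  fixes C :: "real^'n^'n"
  assumes sym: "sym_mat C" and "subspace S" and inv: "\<And>x. x \<in> S \<Longrightarrow> C *v x \<in> S"
    and "u \<in> S" and uu: "u \<bullet> u = 1"
    and max: "\<And>y. y \<in> S \<Longrightarrow> y \<bullet> (C *v y) \<le> (u \<bullet> (C *v u)) * (y \<bullet> y)"
  shows "C *v u = (u \<bullet> (C *v u)) *\<^sub>R u"
proof -
  define l where "l = u \<bullet> (C *v u)"
  have orth: "v \<bullet> (C *v u) = 0" if "v \<in> S" "v \<bullet> u = 0" for v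
  proof (rule quadratic_nonpos_imp_linear_coeff_0)
    fix t :: real
    have "u + t *\<^sub>R v \<in> S" using \<open>subspace S\<close> \<open>u \<in> S\<close> \<open>v \<in> S\<close>
      by (simp add: subspace_add subspace_scale)
    from max[OF this] show "2 * t * (v \<bullet> (C *v u)) + t\<^sup>2 * (v \<bullet> (C *v v) - l * (v \<bullet> v)) \<le> 0"
      using uu \<open>v \<bullet> u = 0\<close> sym_mat_inner_commute[OF sym, of u v]
      by (simp add: l_def matrix_vector_right_distrib matrix_vector_mult_scaleR inner_add_left
          inner_add_right inner_commute power2_eq_square algebra_simps)
  qed
  define v where "v = C *v u - l *\<^sub>R u"
  have "v \<in> S" unfolding v_def using \<open>subspace S\<close> \<open>u \<in> S\<close> inv
    by (simp add: subspace_diff subspace_scale)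
  moreover have "v \<bullet> u = 0" unfolding v_def l_def using uu
    by (simp add: inner_diff_left inner_commute[of "C *v u" u])
  moreover have "v \<bullet> v = v \<bullet> (C *v u) - l * (v \<bullet> u)"
    by (simp add: v_def inner_diff_right)
  ultimately have "v \<bullet> v = 0" using orth by simp
  then show ?thesis by (simp add: v_def l_def)
qed

lemma invariant_subspace_unit_eigenvector:
  fixes C :: "real^'n^'n"
  assumes sym: "sym_mat C" and "subspace S" and inv: "\<And>x. x \<in> S \<Longrightarrow> C *v x \<in> S"
    and "x0 \<in> S" "x0 \<noteq> 0"
  obtains u where "u \<in> S" "u \<bullet> u = 1" "C *v u = (u \<bullet> (C *v u)) *\<^sub>R u"
proof -
  let ?K = "S \<inter> sphere 0 1"
  have "compact ?K"
    using closed_subspace[OF \<open>subspace S\<close>] by (intro closed_Int_compact) auto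
  moreover have "x0 /\<^sub>R norm x0 \<in> ?K"
    using \<open>x0 \<in> S\<close> \<open>x0 \<noteq> 0\<close> \<open>subspace S\<close> by (auto simp: subspace_scale)
  ultimately obtain u where "u \<in> ?K" and umax: "\<And>y. y \<in> ?K \<Longrightarrow> y \<bullet> (C *v y) \<le> u \<bullet> (C *v u)"
    using continuous_attains_sup[of ?K "\<lambda>x. x \<bullet> (C *v x)"] by (force intro: continuous_intros)
  then have "u \<in> S" and uu: "u \<bullet> u = 1" by (auto simp: norm_eq_1)
  moreover have "C *v u = (u \<bullet> (C *v u)) *\<^sub>R u"
    using rayleigh_maximiser_eigenvector[OF sym \<open>subspace S\<close> inv \<open>u \<in> S\<close> uu]
      rayleigh_bound_homogeneous[OF \<open>subspace S\<close>] umax by auto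
  ultimately show thesis by (rule that)
qed

lemma subspace_subset_span_insert:
  fixes u :: "'a::real_inner"
  assumes "subspace S" "u \<in> S" "u \<bullet> u = 1" "S \<inter> {x. x \<bullet> u = 0} \<subseteq> span B"
  shows "S \<subseteq> span (insert u B)"
proof
  fix x assume "x \<in> S"
  then have "x - (x \<bullet> u) *\<^sub>R u \<in> S \<inter> {x. x \<bullet> u = 0}"
    using assms(1-3) by (simp add: subspace_diff subspace_scale inner_diff_left)
  then have "x - (x \<bullet> u) *\<^sub>R u \<in> span (insert u B)"
    using assms(4) span_mono[of B "insert u B"] by blast
  moreover have "(x \<bullet> u) *\<^sub>R u \<in> span (insert u B)"
    by (simp add: span_base span_scale)
  ultimately have "x - (x \<bullet> u) *\<^sub>R u + (x \<bullet> u) *\<^sub>R u \<in> span (insert u B)"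
    by (rule span_add)
  then show "x \<in> span (insert u B)" by simp
qed

lemma invariant_subspace_eigenbasis:
  fixes C :: "real^'n^'n"
  assumes sym: "sym_mat C" and "subspace S" and "\<And>x. x \<in> S \<Longrightarrow> C *v x \<in> S"
  shows "\<exists>B. finite B \<and> B \<subseteq> S \<and> pairwise orthogonal B \<and> (\<forall>u\<in>B. u \<bullet> u = 1) \<and>
           (\<forall>u\<in>B. C *v u = (u \<bullet> (C *v u)) *\<^sub>R u) \<and> S \<subseteq> span B"
  using assms(2,3)
proof (induction "dim S" arbitrary: S rule: less_induct)
  case less
  show ?case
  proof (cases "S \<subseteq> {0}")
    case True
    then show ?thesis by (intro exI[of _ "{}"]) auto
  next
    case False
    then obtain x0 where "x0 \<in> S" "x0 \<noteq> 0" by auto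
    then obtain u where "u \<in> S" and uu: "u \<bullet> u = 1" and Cu: "C *v u = (u \<bullet> (C *v u)) *\<^sub>R u"
      using invariant_subspace_unit_eigenvector[OF sym less.prems] by blast
    define S' where "S' = S \<inter> {x. x \<bullet> u = 0}"
    have sub': "subspace S'" unfolding S'_def
      using less.prems(1) by (auto simp: subspace_def inner_add_left)
    have inv': "C *v x \<in> S'" if "x \<in> S'" for x
      using that less.prems(2) Cu sym_mat_inner_commute[OF sym, of x u]
      by (auto simp: S'_def) (metis inner_scaleR_right mult_zero_right)
    have dim': "dim S' < dim S"
    proof (rule dim_psubset)
      have "u \<notin> S'" "S' \<subseteq> S" using uu by (auto simp: S'_def)
      with \<open>u \<in> S\<close> have "S' \<subset> S" unfolding psubset_eq by blast
      then show "span S' \<subset> span S"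
        by (simp only: span_eq_iff[THEN iffD2, OF sub'] span_eq_iff[THEN iffD2, OF less.prems(1)])
    qed
    obtain B' where B': "finite B'" "B' \<subseteq> S'" "pairwise orthogonal B'"
      "\<forall>u\<in>B'. u \<bullet> u = 1" "\<forall>u\<in>B'. C *v u = (u \<bullet> (C *v u)) *\<^sub>R u" "S' \<subseteq> span B'"
      using less.hyps[OF dim' sub' inv'] by blast
    have "S \<subseteq> span (insert u B')"
      using less.prems(1) \<open>u \<in> S\<close> uu B'(6) unfolding S'_def by (rule subspace_subset_span_insert)
    moreover have "pairwise orthogonal (insert u B')"
      using B'(2,3) by (auto simp: pairwise_insert S'_def orthogonal_def inner_commute)
    moreover have "insert u B' \<subseteq> S"
      using B'(2) \<open>u \<in> S\<close> by (auto simp: S'_def)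
    ultimately show ?thesis
      using B'(1,4,5) uu Cu by (intro exI[of _ "insert u B'"]) simp
  qed
qed

section \<open>The Peierls inequality\<close>

lemma orthonormal_expansion:
  fixes B :: "'a::real_inner set"
  assumes "finite B" "pairwise orthogonal B" "\<And>u. u \<in> B \<Longrightarrow> u \<bullet> u = 1" "x \<in> span B"
  shows "(\<Sum>u\<in>B. (x \<bullet> u) *\<^sub>R u) = x"
proof -
  define y where "y = x - (\<Sum>u\<in>B. (x \<bullet> u) *\<^sub>R u)"
  have orth: "orthogonal y u'" if "u' \<in> B" for u'
  proof -
    have "(\<Sum>u\<in>B. (x \<bullet> u) *\<^sub>R u) \<bullet> u' = (\<Sum>u\<in>B. if u = u' then x \<bullet> u else 0)"
      unfolding inner_sum_left
      using assms(2,3) that by (intro sum.cong) (auto simp: pairwise_def orthogonal_def)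
    also have "\<dots> = x \<bullet> u'" using assms(1) that by simp
    finally show ?thesis unfolding orthogonal_def y_def inner_diff_left by simp
  qed
  have "y \<in> span B"
    unfolding y_def by (simp add: assms(4) span_diff span_sum span_scale span_base)
  then have "orthogonal y y" using orth by (rule orthogonal_to_span)
  then show ?thesis unfolding y_def orthogonal_def by simp
qed

text \<open>Orthonormality of an eigenbasis is only ever used through the expansion
  \<open>x = \<Sum>\<^sub>u (x \<bullet> u) u\<close>.\<close>
locale eigen_expansion =
  fixes C :: "real^'n^'n" and B :: "(real^'n) set" and \<mu> :: "real^'n \<Rightarrow> real"
  assumes finite_basis: "finite B"
    and eigenvector: "\<And>u. u \<in> B \<Longrightarrow> C *v u = \<mu> u *\<^sub>R u"
    and expansion: "\<And>x. (\<Sum>u\<in>B. (x \<bullet> u) *\<^sub>R u) = x"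

lemma sym_mat_eigen_expansion:
  fixes C :: "real^'n^'n"
  assumes "sym_mat C"
  obtains B \<mu> where "eigen_expansion C B \<mu>"
proof -
  obtain B where B: "finite B" "pairwise orthogonal B" "\<forall>u\<in>B. u \<bullet> u = 1"
    "\<forall>u\<in>B. C *v u = (u \<bullet> (C *v u)) *\<^sub>R u" "UNIV \<subseteq> span B"
    using invariant_subspace_eigenbasis[OF assms subspace_UNIV] by blast
  have "(\<Sum>u\<in>B. (x \<bullet> u) *\<^sub>R u) = x" for x
    using B(1,2) by (rule orthonormal_expansion) (use B(3,5) in auto)
  with B(1,4) have "eigen_expansion C B (\<lambda>u. u \<bullet> (C *v u))"
    by unfold_locales auto
  then show thesis by (rule that)
qed

lemma mat_pow_Suc: "mat_pow C (Suc k) = C ** mat_pow C k"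
  by (simp add: mat_pow_def)

lemma mat_pow_eigenvector:
  assumes "C *v u = l *\<^sub>R u"
  shows "mat_pow C k *v u = (l ^ k) *\<^sub>R u"
proof (induction k)
  case 0
  then show ?case by (simp add: mat_pow_def)
next
  case (Suc k)
  then show ?case
    using assms by (simp add: mat_pow_Suc matrix_vector_mul_assoc[symmetric] matrix_vector_mult_scaleR)
qed

context eigen_expansion
begin

lemma entry_expansion: "A $ j $ i = (\<Sum>u\<in>B. u $ i * (A *v u) $ j)"
proof -
  have "A $ j $ i = (A *v axis i 1) $ j"
    by (simp add: matrix_vector_mult_basis column_def)
  also have "axis i 1 = (\<Sum>u\<in>B. (u $ i) *\<^sub>R u)"
    using expansion[of "axis i 1"] by (simp add: inner_axis')
  finally show ?thesis
    by (simp add: vec.sum matrix_vector_mult_scaleR sum_component)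
qed

lemma sum_basis_products: "(\<Sum>u\<in>B. u $ i * u $ j) = (if i = j then 1 else 0)"
  using entry_expansion[of "mat 1" j i] by (simp add: matrix_vector_mul_lid) (auto simp: mat_def)

lemma mat_pow_entry: "mat_pow C k $ j $ i = (\<Sum>u\<in>B. u $ i * u $ j * \<mu> u ^ k)"
  using entry_expansion[of "mat_pow C k" j i] mat_pow_eigenvector[OF eigenvector]
  by (simp add: mult_ac)

lemma entry_eigen_sum: "C $ j $ i = (\<Sum>u\<in>B. u $ i * u $ j * \<mu> u)"
  using mat_pow_entry[of 1 j i] by (simp add: mat_pow_def)

lemma mat_exp_entry: "mat_exp C $ j $ i = (\<Sum>u\<in>B. u $ i * u $ j * exp (\<mu> u))"
proof -
  have "(\<lambda>k. mat_pow C k $ j $ i / fact k) sums (\<Sum>u\<in>B. u $ i * u $ j * exp (\<mu> u))"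
    unfolding mat_pow_entry sum_divide_distrib
  proof (rule sums_sum)
    fix u
    show "(\<lambda>k. u $ i * u $ j * \<mu> u ^ k / fact k) sums (u $ i * u $ j * exp (\<mu> u))"
      using sums_mult[OF exp_sums, of "u $ i * u $ j"] by simp
  qed
  then show ?thesis by (simp add: mat_exp_def sums_iff)
qed

text \<open>The weights \<open>(u $ i)\<^sup>2\<close> sum to \<open>1\<close> and have barycentre \<open>C $ i $ i\<close>: this is Jensen's inequality
  for \<open>exp\<close> with its remainder made explicit.\<close>
lemma mat_exp_diag_gap:
  "mat_exp C $ i $ i - exp (C $ i $ i) = (\<Sum>u\<in>B. (u $ i)\<^sup>2 * exp_tangent_gap (C $ i $ i) (\<mu> u))"
proof -
  have "(\<Sum>u\<in>B. (u $ i)\<^sup>2 * exp_tangent_gap (C $ i $ i) (\<mu> u)) =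
      (\<Sum>u\<in>B. u $ i * u $ i * exp (\<mu> u)) - exp (C $ i $ i) *
        ((\<Sum>u\<in>B. u $ i * u $ i) + (\<Sum>u\<in>B. u $ i * u $ i * \<mu> u) - C $ i $ i * (\<Sum>u\<in>B. u $ i * u $ i))"
    by (simp add: exp_tangent_gap_def power2_eq_square algebra_simps sum.distrib sum_subtractf
        sum_distrib_left)
  then show ?thesis by (simp add: sum_basis_products mat_exp_entry entry_eigen_sum[symmetric])
qed

lemma exp_diag_le_mat_exp: "exp (C $ i $ i) \<le> mat_exp C $ i $ i"
  using mat_exp_diag_gap[of i] sum_nonneg[of B "\<lambda>u. (u $ i)\<^sup>2 * exp_tangent_gap (C $ i $ i) (\<mu> u)"]
  by (simp add: exp_tangent_gap_nonneg)

lemma eigenvalue_eq_diag_entry: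
  assumes "mat_exp C $ i $ i = exp (C $ i $ i)" and "u \<in> B" and "u $ i \<noteq> 0"
  shows "\<mu> u = C $ i $ i"
proof (rule ccontr)
  let ?g = "\<lambda>v. (v $ i)\<^sup>2 * exp_tangent_gap (C $ i $ i) (\<mu> v)"
  assume "\<mu> u \<noteq> C $ i $ i"
  then have "0 < ?g u" using \<open>u $ i \<noteq> 0\<close> by (simp add: exp_tangent_gap_pos)
  then have "0 < sum ?g B"
    using finite_basis \<open>u \<in> B\<close> exp_tangent_gap_nonneg by (intro sum_pos2) auto
  then show False using mat_exp_diag_gap[of i] assms(1) by simp
qed

lemma diag_mat_if_mat_exp_diag_eq:
  assumes "\<And>i. mat_exp C $ i $ i = exp (C $ i $ i)"
  shows "diag_mat C"
  unfolding diag_mat_def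
proof (intro allI impI)
  fix i j :: 'n assume "i \<noteq> j"
  have "C $ i $ j = (\<Sum>u\<in>B. u $ j * u $ i * \<mu> u)" by (rule entry_eigen_sum)
  also have "\<dots> = (\<Sum>u\<in>B. u $ j * u $ i * C $ j $ j)"
    using eigenvalue_eq_diag_entry[OF assms] by (intro sum.cong) auto
  also have "\<dots> = 0"
    using \<open>i \<noteq> j\<close> by (simp add: sum_distrib_right[symmetric] sum_basis_products)
  finally show "C $ i $ j = 0" .
qed

end

lemma trace_mat_exp_ge:
  fixes C :: "real^'n^'n"
  assumes "sym_mat C"
  shows "(\<Sum>i\<in>UNIV. exp (C $ i $ i)) \<le> trace (mat_exp C)"
proof -
  obtain B \<mu> where "eigen_expansion C B \<mu>" using sym_mat_eigen_expansion[OF assms] .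
  then show ?thesis
    unfolding trace_def by (intro sum_mono) (rule eigen_expansion.exp_diag_le_mat_exp)
qed

lemma diag_mat_if_trace_mat_exp_eq:
  fixes C :: "real^'n^'n"
  assumes "sym_mat C" and "trace (mat_exp C) = (\<Sum>i\<in>UNIV. exp (C $ i $ i))"
  shows "diag_mat C"
proof -
  obtain B \<mu> where eb: "eigen_expansion C B \<mu>" using sym_mat_eigen_expansion[OF assms(1)] .
  have "exp (C $ i $ i) = mat_exp C $ i $ i" for i
    by (rule sum_mono_inv[of _ UNIV])
      (use assms(2) eigen_expansion.exp_diag_le_mat_exp[OF eb] in \<open>auto simp: trace_def\<close>)
  then show ?thesis by (intro eigen_expansion.diag_mat_if_mat_exp_diag_eq[OF eb]) simp
qed

lemma mat_pow_diag_mat: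
  fixes C :: "real^'n^'n"
  assumes "diag_mat C"
  shows "mat_pow C k = (\<chi> i j. if i = j then (C $ i $ i) ^ k else 0)"
proof (induction k)
  case 0
  then show ?case by (simp add: mat_pow_def mat_def vec_eq_iff)
next
  case (Suc k)
  have "(C ** mat_pow C k) $ i $ j = (if i = j then (C $ i $ i) ^ Suc k else 0)" for i j
  proof -
    have "(C ** mat_pow C k) $ i $ j = (\<Sum>l\<in>UNIV. C $ i $ l * (if l = j then C $ l $ l ^ k else 0))"
      unfolding Suc by (simp add: matrix_matrix_mult_def)
    also have "\<dots> = (\<Sum>l\<in>UNIV. if l = j then C $ i $ l * C $ l $ l ^ k else 0)"
      by (rule sum.cong) auto
    also have "\<dots> = (if i = j then (C $ i $ i) ^ Suc k else 0)"
      using assms unfolding diag_mat_def by auto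
    finally show ?thesis .
  qed
  then show ?case by (simp add: mat_pow_Suc vec_eq_iff)
qed

lemma trace_mat_exp_diag_mat:
  fixes C :: "real^'n^'n"
  assumes "diag_mat C"
  shows "trace (mat_exp C) = (\<Sum>i\<in>UNIV. exp (C $ i $ i))"
  using exp_sums by (simp add: trace_def mat_exp_def mat_pow_diag_mat[OF assms] sums_iff)

lemma diag_mat_diff: "diag_mat A \<Longrightarrow> diag_mat B \<Longrightarrow> diag_mat (A - B)"
  unfolding diag_mat_def by simp

lemma sym_mat_diff: "sym_mat A \<Longrightarrow> sym_mat B \<Longrightarrow> sym_mat (A - B)"
  unfolding sym_mat_def by (simp add: transpose_def vec_eq_iff)

section \<open>Potentials on acyclic digraphs\<close>

lemma acyclic_boundary_induct:
  assumes "finite V" "R \<subseteq> V \<times> V" "acyclic R"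
    and succ: "\<And>v. v \<in> V \<Longrightarrow> v \<notin> \<Gamma> \<Longrightarrow> \<exists>w. (v, w) \<in> R"
    and base: "\<And>v. v \<in> \<Gamma> \<Longrightarrow> P v"
    and step: "\<And>v w. v \<in> V \<Longrightarrow> v \<notin> \<Gamma> \<Longrightarrow> (v, w) \<in> R \<Longrightarrow> P w \<Longrightarrow> P v"
    and "v \<in> V"
  shows "P v"
proof -
  have "finite R" using assms(1,2) finite_subset by blast
  then have "wf (R\<inverse>)" using \<open>acyclic R\<close> by (rule finite_acyclic_wf_converse)
  then show ?thesis using \<open>v \<in> V\<close>
  proof (induction v rule: wf_induct_rule)
    case (less v)
    show ?case
    proof (cases "v \<in> \<Gamma>")
      case False
      then obtain w where "(v, w) \<in> R" using succ less.prems by blast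
      moreover have "P w" using less.IH \<open>(v, w) \<in> R\<close> assms(2) by blast
      ultimately show ?thesis using step less.prems False by blast
    qed (rule base)
  qed
qed

text \<open>Along a path to \<open>\<Gamma>\<close> the potential drops by at most \<open>c\<close> per edge, and a path in an acyclic
  graph has fewer than \<open>card V\<close> edges; the induction measures paths by the set of vertices
  reachable from \<open>v\<close>.\<close>
lemma acyclic_potential_le:
  fixes x :: "'v \<Rightarrow> real"
  assumes "finite V" "R \<subseteq> V \<times> V" "acyclic R"
    and succ: "\<And>v. v \<in> V \<Longrightarrow> v \<notin> \<Gamma> \<Longrightarrow> \<exists>w. (v, w) \<in> R"
    and edge: "\<And>v w. (v, w) \<in> R \<Longrightarrow> x v \<le> x w + c" and "c \<ge> 0"
    and base: "\<And>v. v \<in> \<Gamma> \<Longrightarrow> x v \<le> Z"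
    and "v \<in> V"
  shows "x v \<le> Z + c * card V"
proof -
  have reach_V: "R\<^sup>+ `` {u} \<subseteq> V" for u
    using trancl_subset_Sigma[OF assms(2)] by blast
  have "x v \<le> Z + c * card (R\<^sup>+ `` {v})"
  proof (rule acyclic_boundary_induct[OF assms(1-3) succ _ _ \<open>v \<in> V\<close>])
    fix u assume "u \<in> \<Gamma>"
    then show "x u \<le> Z + c * card (R\<^sup>+ `` {u})" using base \<open>c \<ge> 0\<close> by (simp add: add_increasing2)
  next
    fix u w assume uw: "(u, w) \<in> R" and IH: "x w \<le> Z + c * card (R\<^sup>+ `` {w})"
    have "R\<^sup>+ `` {w} \<subset> R\<^sup>+ `` {u}"
    proof
      show "R\<^sup>+ `` {w} \<subseteq> R\<^sup>+ `` {u}" using uw by (auto intro: trancl_into_trancl2)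
      have "w \<notin> R\<^sup>+ `` {w}" using \<open>acyclic R\<close> by (auto simp: acyclic_def)
      with uw show "R\<^sup>+ `` {w} \<noteq> R\<^sup>+ `` {u}" by blast
    qed
    then have "card (R\<^sup>+ `` {w}) < card (R\<^sup>+ `` {u})"
      by (rule psubset_card_mono[OF finite_subset[OF reach_V \<open>finite V\<close>]])
    then have "real (card (R\<^sup>+ `` {w}) + 1) \<le> real (card (R\<^sup>+ `` {u}))"
      by (simp only: of_nat_le_iff Suc_eq_plus1[symmetric] Suc_le_eq)
    then have "real (card (R\<^sup>+ `` {w})) + 1 \<le> card (R\<^sup>+ `` {u})"
      by simp
    then have "c * (real (card (R\<^sup>+ `` {w})) + 1) \<le> c * card (R\<^sup>+ `` {u})"
      using \<open>c \<ge> 0\<close> by (rule mult_left_mono)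
    then have "c * card (R\<^sup>+ `` {w}) + c \<le> c * card (R\<^sup>+ `` {u})"
      by (simp add: distrib_left)
    then show "x u \<le> Z + c * card (R\<^sup>+ `` {u})" using edge[OF uw] IH by linarith
  qed
  also have "\<dots> \<le> Z + c * card V"
    using card_mono[OF \<open>finite V\<close> reach_V] \<open>c \<ge> 0\<close> by (simp add: mult_left_mono)
  finally show ?thesis .
qed

section \<open>The scalar problem\<close>

lemma exp_le_chi_1:
  assumes "finite E" "(a, b) \<in> E"
  shows "exp (x a - x b) \<le> chi_1 E x"
  unfolding chi_1_def using member_le_sum[OF assms(2), of "\<lambda>(v, w). exp (x v - x w)"] assms(1)
  by auto

lemma chi_1_midpoint_less:
  assumes "finite E" "(a, b) \<in> E" "x a - x b \<noteq> y a - y b"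
  shows "chi_1 E (\<lambda>v. (x v + y v) / 2) < (chi_1 E x + chi_1 E y) / 2"
proof -
  have "chi_1 E (\<lambda>v. (x v + y v) / 2) = (\<Sum>(v, w)\<in>E. exp (((x v - x w) + (y v - y w)) / 2))"
    unfolding chi_1_def by (rule sum.cong) (auto simp: field_simps)
  also have "\<dots> < (\<Sum>(v, w)\<in>E. (exp (x v - x w) + exp (y v - y w)) / 2)"
  proof (rule sum_strict_mono_ex1[OF \<open>finite E\<close>])
    show "\<exists>p\<in>E. (case p of (v, w) \<Rightarrow> exp (((x v - x w) + (y v - y w)) / 2))
        < (case p of (v, w) \<Rightarrow> (exp (x v - x w) + exp (y v - y w)) / 2)"
      using assms(2,3) exp_midpoint_less by (intro bexI[of _ "(a, b)"]) auto
  qed (use exp_midpoint_le in \<open>auto simp: split_beta\<close>)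
  also have "\<dots> = (chi_1 E x + chi_1 E y) / 2"
    unfolding chi_1_def by (simp add: split_def sum_divide_distrib[symmetric] sum.distrib[symmetric])
  finally show ?thesis .
qed

lemma continuous_on_chi_1: "continuous_on S (chi_1 (E :: ('v \<times> 'v) set))"
proof -
  have "continuous_on S (\<lambda>x::'v \<Rightarrow> real. x v)" for v
    by (rule continuous_on_subset[OF continuous_on_product_coordinates]) simp
  then show ?thesis
    unfolding chi_1_def by (intro continuous_on_sum) (auto simp: split_def intro!: continuous_intros)
qed

lemma compact_PiE_UNIV:
  fixes S :: "'a \<Rightarrow> 'b::topological_space set"
  assumes "\<And>v. compact (S v)"
  shows "compact (PiE UNIV S)"
proof -
  have "compactin (product_topology (\<lambda>_. euclidean) UNIV) (PiE UNIV S)"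
    using assms by (simp add: compactin_PiE)
  then show ?thesis by (simp add: euclidean_product_topology)
qed

definition RV_box :: "'v set \<Rightarrow> 'v set \<Rightarrow> ('v \<Rightarrow> real) \<Rightarrow> real \<Rightarrow> ('v \<Rightarrow> real) set" where
  "RV_box V \<Gamma> y r = {x. \<forall>v. x v \<in> (if v \<in> \<Gamma> then {y v} else if v \<in> V then {-r..r} else {0})}"

lemma compact_RV_box: "compact (RV_box V \<Gamma> y r)"
proof -
  have "RV_box V \<Gamma> y r = PiE UNIV (\<lambda>v. if v \<in> \<Gamma> then {y v} else if v \<in> V then {-r..r} else {0})"
    by (auto simp: RV_box_def PiE_UNIV_domain Pi_def)
  then show ?thesis by (simp add: compact_PiE_UNIV)
qed

lemma RV_box_subset: "\<Gamma> \<subseteq> V \<Longrightarrow> RV_box V \<Gamma> y r \<subseteq> RV V \<Gamma> y"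
  by (auto simp: RV_box_def RV_def)

lemma extension_by_zero_in_RV_box: "r \<ge> 0 \<Longrightarrow> (\<lambda>v. if v \<in> \<Gamma> then y v else 0) \<in> RV_box V \<Gamma> y r"
  by (simp add: RV_box_def)

lemma RV_outside_RV_box:
  assumes "x \<in> RV V \<Gamma> y" "x \<notin> RV_box V \<Gamma> y r"
  obtains v where "v \<in> V" "r < \<bar>x v\<bar>"
proof -
  obtain v where v: "x v \<notin> (if v \<in> \<Gamma> then {y v} else if v \<in> V then {-r..r} else {0})"
    using assms(2) by (auto simp: RV_box_def)
  with assms(1) have "v \<in> V" "v \<notin> \<Gamma>" by (auto simp: RV_def split: if_splits)
  with v have "r < \<bar>x v\<bar>" by auto
  with \<open>v \<in> V\<close> show thesis by (rule that)
qed

locale boundary_dag =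
  fixes V \<Gamma> :: "'v set" and E :: "('v \<times> 'v) set"
  assumes finite_vertices: "finite V" and edges_subset: "E \<subseteq> V \<times> V" and acyclic_edges: "acyclic E"
    and boundary_subset: "\<Gamma> \<subseteq> V"
    and sink_in_boundary: "\<And>v. is_sink V E v \<Longrightarrow> v \<in> \<Gamma>"
    and source_in_boundary: "\<And>v. is_source V E v \<Longrightarrow> v \<in> \<Gamma>"
begin

lemma finite_edges: "finite E"
  using edges_subset finite_vertices by (meson finite_SigmaI finite_subset)

lemma successor_exists: "v \<in> V \<Longrightarrow> v \<notin> \<Gamma> \<Longrightarrow> \<exists>w. (v, w) \<in> E"
  using sink_in_boundary unfolding is_sink_def by blast

lemma predecessor_exists: "v \<in> V \<Longrightarrow> v \<notin> \<Gamma> \<Longrightarrow> \<exists>w. (v, w) \<in> E\<inverse>"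
  using source_in_boundary unfolding is_source_def by blast

lemma potential_le:
  fixes x :: "'v \<Rightarrow> real"
  assumes "\<And>v w. (v, w) \<in> E \<Longrightarrow> x v \<le> x w + c" "c \<ge> 0" "\<And>v. v \<in> \<Gamma> \<Longrightarrow> x v \<le> Z" "v \<in> V"
  shows "x v \<le> Z + c * card V"
  using finite_vertices edges_subset acyclic_edges successor_exists assms by (rule acyclic_potential_le)

lemma potential_ge:
  fixes x :: "'v \<Rightarrow> real"
  assumes "\<And>v w. (v, w) \<in> E \<Longrightarrow> x v \<le> x w + c" "c \<ge> 0" "\<And>v. v \<in> \<Gamma> \<Longrightarrow> - x v \<le> Z" "v \<in> V"
  shows "- x v \<le> Z + c * card V"
proof (rule acyclic_potential_le[where R = "E\<inverse>" and x = "\<lambda>v. - x v"])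
  show "E\<inverse> \<subseteq> V \<times> V" using edges_subset by auto
  show "acyclic (E\<inverse>)" using acyclic_edges by (simp add: acyclic_converse)
  show "\<exists>w. (u, w) \<in> E\<inverse>" if "u \<in> V" "u \<notin> \<Gamma>" for u using predecessor_exists that .
  show "- x a \<le> - x b + c" if "(a, b) \<in> E\<inverse>" for a b using assms(1)[of b a] that by simp
qed (use finite_vertices assms(2-4) in simp_all)

text \<open>On a sublevel set \<open>chi_1 E x \<le> M\<close> every edge difference is at most \<open>ln M\<close>; since every vertex
  lies on a path from a source to a sink, the values of \<open>x\<close> are bounded in terms of the boundary data.\<close>
lemma chi_1_sublevel_bounded:
  assumes "x \<in> RV V \<Gamma> y" "chi_1 E x \<le> M" "1 \<le> M" "v \<in> V"
  shows "\<bar>x v\<bar> \<le> (\<Sum>u\<in>\<Gamma>. \<bar>y u\<bar>) + ln M * card V"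
proof -
  have edge: "x a \<le> x b + ln M" if "(a, b) \<in> E" for a b
  proof -
    have "exp (x a - x b) \<le> M" using order_trans[OF exp_le_chi_1[OF finite_edges that] assms(2)] .
    then have "x a - x b \<le> ln M" using \<open>1 \<le> M\<close> by (simp add: ln_ge_iff)
    then show ?thesis by simp
  qed
  define Z where "Z = (\<Sum>u\<in>\<Gamma>. \<bar>y u\<bar>)"
  have boundary: "x u \<le> Z" "- x u \<le> Z" if "u \<in> \<Gamma>" for u
  proof -
    have "\<bar>y u\<bar> \<le> Z"
      unfolding Z_def using that finite_subset[OF boundary_subset finite_vertices]
      by (intro member_le_sum) auto
    moreover have "x u = y u" using assms(1) that by (simp add: RV_def)
    ultimately show "x u \<le> Z" "- x u \<le> Z" by linarith+
  qed
  have "0 \<le> ln M" using \<open>1 \<le> M\<close> by simp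
  have "x v \<le> Z + ln M * card V"
    using edge \<open>0 \<le> ln M\<close> boundary(1) \<open>v \<in> V\<close> by (rule potential_le)
  moreover have "- x v \<le> Z + ln M * card V"
    using edge \<open>0 \<le> ln M\<close> boundary(2) \<open>v \<in> V\<close> by (rule potential_ge)
  ultimately show ?thesis unfolding Z_def by linarith
qed

lemma chi_1_has_minimiser: "\<exists>m\<in>RV V \<Gamma> y. \<forall>x\<in>RV V \<Gamma> y. chi_1 E m \<le> chi_1 E x"
proof -
  define x0 where "x0 v = (if v \<in> \<Gamma> then y v else 0)" for v
  define M where "M = max 1 (chi_1 E x0)"
  define r where "r = (\<Sum>u\<in>\<Gamma>. \<bar>y u\<bar>) + ln M * card V"
  have "r \<ge> 0" unfolding r_def M_def by (simp add: sum_nonneg)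
  then have "x0 \<in> RV_box V \<Gamma> y r" unfolding x0_def by (rule extension_by_zero_in_RV_box)
  then have "\<exists>m\<in>RV_box V \<Gamma> y r. \<forall>x\<in>RV_box V \<Gamma> y r. chi_1 E m \<le> chi_1 E x"
    by (intro continuous_attains_inf compact_RV_box continuous_on_chi_1) auto
  then obtain m where m: "m \<in> RV_box V \<Gamma> y r"
    and m_min: "\<And>x. x \<in> RV_box V \<Gamma> y r \<Longrightarrow> chi_1 E m \<le> chi_1 E x"
    by blast
  have "chi_1 E m \<le> chi_1 E x" if x: "x \<in> RV V \<Gamma> y" for x
  proof (cases "x \<in> RV_box V \<Gamma> y r")
    case False
    obtain v where "v \<in> V" "r < \<bar>x v\<bar>" by (rule RV_outside_RV_box[OF x False])
    have "M < chi_1 E x"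
    proof (rule ccontr)
      assume "\<not> M < chi_1 E x"
      then have "chi_1 E x \<le> M" by simp
      moreover have "1 \<le> M" by (simp add: M_def)
      ultimately have "\<bar>x v\<bar> \<le> r"
        unfolding r_def by (rule chi_1_sublevel_bounded[OF x _ _ \<open>v \<in> V\<close>])
      with \<open>r < \<bar>x v\<bar>\<close> show False by simp
    qed
    moreover have "chi_1 E m \<le> chi_1 E x0" by (rule m_min) fact
    ultimately show ?thesis by (simp add: M_def)
  qed (rule m_min)
  moreover have "m \<in> RV V \<Gamma> y" using m RV_box_subset[OF boundary_subset] by blast
  ultimately show ?thesis by blast
qed

text \<open>By strict convexity two minimisers have the same edge differences; the difference of them
  is then constant along edges and vanishes on the sinks.\<close>
lemma chi_1_minimiser_unique:
  assumes "m \<in> RV V \<Gamma> y" "m' \<in> RV V \<Gamma> y"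
    and m_min: "\<forall>x\<in>RV V \<Gamma> y. chi_1 E m \<le> chi_1 E x"
    and m'_min: "\<forall>x\<in>RV V \<Gamma> y. chi_1 E m' \<le> chi_1 E x"
  shows "m' = m"
proof -
  define mid where "mid v = (m v + m' v) / 2" for v
  have "mid \<in> RV V \<Gamma> y" using assms(1,2) by (auto simp: RV_def mid_def)
  then have "chi_1 E m \<le> chi_1 E mid" "chi_1 E m' \<le> chi_1 E mid"
    using m_min m'_min by blast+
  then have not_less: "\<not> chi_1 E mid < (chi_1 E m + chi_1 E m') / 2"
    by argo
  have edge: "m' a - m a = m' b - m b" if "(a, b) \<in> E" for a b
  proof (rule ccontr)
    assume "m' a - m a \<noteq> m' b - m b"
    then have "m a - m b \<noteq> m' a - m' b" by linarith
    with not_less show False using chi_1_midpoint_less[OF finite_edges that] unfolding mid_def by blast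
  qed
  have inside: "m' v - m v = 0" if "v \<in> V" for v
    using finite_vertices edges_subset acyclic_edges successor_exists _ _ that
  proof (rule acyclic_boundary_induct)
    show "m' u - m u = 0" if "u \<in> \<Gamma>" for u using assms(1,2) that by (simp add: RV_def)
  next
    show "m' u - m u = 0" if "(u, w) \<in> E" "m' w - m w = 0" for u w
      using edge[OF that(1)] that(2) by simp
  qed
  show ?thesis
  proof
    fix v
    show "m' v = m v"
      using inside[of v] assms(1,2) by (cases "v \<in> V") (simp_all add: RV_def)
  qed
qed

lemma chi_1_unique_minimiser: "\<exists>m. unique_minimiser (chi_1 E) (RV V \<Gamma> y) m"
proof -
  obtain m where "m \<in> RV V \<Gamma> y" "\<forall>x\<in>RV V \<Gamma> y. chi_1 E m \<le> chi_1 E x"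
    using chi_1_has_minimiser by blast
  then have "unique_minimiser (chi_1 E) (RV V \<Gamma> y) m"
    unfolding unique_minimiser_def using chi_1_minimiser_unique by blast
  then show ?thesis by blast
qed

end

section \<open>The matrix problem\<close>

definition diag_array :: "('n \<Rightarrow> 'v \<Rightarrow> real) \<Rightarrow> 'v \<Rightarrow> real^'n^'n" where
  "diag_array m v = (\<chi> i j. if i = j then m i v else 0)"

lemma diag_mat_diag_array: "diag_mat (diag_array m v)"
  by (simp add: diag_mat_def diag_array_def)

lemma sym_mat_diag_array: "sym_mat (diag_array m v)"
  by (simp add: sym_mat_def diag_array_def transpose_def vec_eq_iff)

lemma sum_chi_1_diag_entries:
  "(\<Sum>i\<in>UNIV. chi_1 E (\<lambda>v. x v $ i $ i)) = (\<Sum>(v, w)\<in>E. \<Sum>i\<in>UNIV. exp (x v $ i $ i - x w $ i $ i))"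
  unfolding chi_1_def split_def by (rule sum.swap)

lemma chi_d_diag_array: "chi_d E (diag_array m) = (\<Sum>i\<in>UNIV. chi_1 E (m i))"
proof -
  have "trace (mat_exp (diag_array m v - diag_array m w)) = (\<Sum>i\<in>UNIV. exp (m i v - m i w))" for v w
    by (simp add: trace_mat_exp_diag_mat diag_mat_diff diag_mat_diag_array) (simp add: diag_array_def)
  then show ?thesis
    using sum_chi_1_diag_entries[of E "diag_array m"] by (simp add: chi_d_def diag_array_def)
qed

lemma sum_chi_1_diag_le_chi_d:
  assumes "\<And>v w. (v, w) \<in> E \<Longrightarrow> sym_mat (x v - x w)"
  shows "(\<Sum>i\<in>UNIV. chi_1 E (\<lambda>v. x v $ i $ i)) \<le> chi_d E x"
  unfolding sum_chi_1_diag_entries chi_d_def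
  using trace_mat_exp_ge[OF assms] by (intro sum_mono) auto

lemma diag_mat_diff_if_chi_d_le:
  assumes "finite E" and sym: "\<And>v w. (v, w) \<in> E \<Longrightarrow> sym_mat (x v - x w)"
    and le: "chi_d E x \<le> (\<Sum>i\<in>UNIV. chi_1 E (\<lambda>v. x v $ i $ i))" and "(v, w) \<in> E"
  shows "diag_mat (x v - x w)"
proof (rule diag_mat_if_trace_mat_exp_eq[OF sym[OF \<open>(v, w) \<in> E\<close>]])
  let ?f = "\<lambda>(v, w). \<Sum>i\<in>UNIV. exp (x v $ i $ i - x w $ i $ i)"
  let ?g = "\<lambda>(v, w). trace (mat_exp (x v - x w))"
  have "(\<Sum>i\<in>UNIV. chi_1 E (\<lambda>v. x v $ i $ i)) \<le> chi_d E x"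
    by (rule sum_chi_1_diag_le_chi_d) (rule sym)
  with le have "sum ?f E = sum ?g E"
    unfolding sum_chi_1_diag_entries chi_d_def by argo
  then have "?f (v, w) = ?g (v, w)"
    by (rule sum_mono_inv) (use trace_mat_exp_ge[OF sym] assms(1,4) in auto)
  then show "trace (mat_exp (x v - x w)) = (\<Sum>i\<in>UNIV. exp ((x v - x w) $ i $ i))" by simp
qed

context boundary_dag
begin

lemma diag_mat_if_edge_diffs_diag:
  fixes x :: "'v \<Rightarrow> real^'n^'n"
  assumes "\<And>v. v \<in> \<Gamma> \<Longrightarrow> diag_mat (x v)" and "\<And>v w. (v, w) \<in> E \<Longrightarrow> diag_mat (x v - x w)"
    and "v \<in> V"
  shows "diag_mat (x v)"
  using finite_vertices edges_subset acyclic_edges successor_exists assms(1) _ \<open>v \<in> V\<close>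
proof (rule acyclic_boundary_induct)
  show "diag_mat (x u)" if "(u, w) \<in> E" "diag_mat (x w)" for u w
    unfolding diag_mat_def
  proof (intro allI impI)
    fix i j :: 'n assume "i \<noteq> j"
    then have "x u $ i $ j - x w $ i $ j = 0" "x w $ i $ j = 0"
      using assms(2)[OF that(1)] that(2) by (simp_all add: diag_mat_def)
    then show "x u $ i $ j = 0" by simp
  qed
qed

end

locale diagonal_boundary_problem = boundary_dag V \<Gamma> E
  for V \<Gamma> :: "'v set" and E :: "('v \<times> 'v) set" +
  fixes z :: "'v \<Rightarrow> real^'n^'n" and m :: "'n \<Rightarrow> 'v \<Rightarrow> real"
  assumes boundary_diag: "\<And>v. v \<in> \<Gamma> \<Longrightarrow> diag_mat (z v)"
    and scalar_minimiser: "\<And>i. unique_minimiser (chi_1 E) (RV V \<Gamma> (\<lambda>v. z v $ i $ i)) (m i)"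
begin

lemma scalar_minimiser_in: "m i \<in> RV V \<Gamma> (\<lambda>v. z v $ i $ i)"
  and scalar_minimiser_le: "x \<in> RV V \<Gamma> (\<lambda>v. z v $ i $ i) \<Longrightarrow> chi_1 E (m i) \<le> chi_1 E x"
  using scalar_minimiser[of i] by (auto simp: unique_minimiser_def)

lemma diag_entries_in_RV: "x \<in> SymV V \<Gamma> z \<Longrightarrow> (\<lambda>v. x v $ i $ i) \<in> RV V \<Gamma> (\<lambda>v. z v $ i $ i)"
  by (simp add: SymV_def RV_def)

lemma SymV_edge_sym: "x \<in> SymV V \<Gamma> z \<Longrightarrow> (v, w) \<in> E \<Longrightarrow> sym_mat (x v - x w)"
  using edges_subset by (auto simp: SymV_def intro: sym_mat_diff)

lemma diag_array_in_SymV: "diag_array m \<in> SymV V \<Gamma> z"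
proof -
  have "diag_array m v = z v" if "v \<in> \<Gamma>" for v
    using scalar_minimiser_in boundary_diag[OF that] that
    by (auto simp: diag_array_def RV_def diag_mat_def vec_eq_iff)
  moreover have "diag_array m v = 0" if "v \<notin> V" for v
    using scalar_minimiser_in that by (simp add: diag_array_def RV_def vec_eq_iff)
  ultimately show ?thesis by (simp add: SymV_def sym_mat_diag_array)
qed

lemma chi_d_diag_array_le:
  "x \<in> SymV V \<Gamma> z \<Longrightarrow> chi_d E (diag_array m) \<le> (\<Sum>i\<in>UNIV. chi_1 E (\<lambda>v. x v $ i $ i))"
  unfolding chi_d_diag_array by (intro sum_mono scalar_minimiser_le diag_entries_in_RV)

lemma sum_diag_entries_le_chi_d:
  "x \<in> SymV V \<Gamma> z \<Longrightarrow> (\<Sum>i\<in>UNIV. chi_1 E (\<lambda>v. x v $ i $ i)) \<le> chi_d E x"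
  by (rule sum_chi_1_diag_le_chi_d) (rule SymV_edge_sym)

lemma diag_array_minimises: "x \<in> SymV V \<Gamma> z \<Longrightarrow> chi_d E (diag_array m) \<le> chi_d E x"
  using chi_d_diag_array_le sum_diag_entries_le_chi_d by (rule order_trans)

lemma minimiser_chi_d_le:
  assumes "x \<in> SymV V \<Gamma> z" and "\<And>y. y \<in> SymV V \<Gamma> z \<Longrightarrow> chi_d E x \<le> chi_d E y"
  shows "chi_d E x \<le> (\<Sum>i\<in>UNIV. chi_1 E (\<lambda>v. x v $ i $ i))"
  using assms(2)[OF diag_array_in_SymV] chi_d_diag_array_le[OF assms(1)] by (rule order_trans)

lemma minimiser_diag_entries:
  assumes x: "x \<in> SymV V \<Gamma> z" and x_min: "\<And>y. y \<in> SymV V \<Gamma> z \<Longrightarrow> chi_d E x \<le> chi_d E y"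
  shows "(\<lambda>v. x v $ i $ i) = m i"
proof -
  have "(\<Sum>i\<in>UNIV. chi_1 E (m i)) = (\<Sum>i\<in>UNIV. chi_1 E (\<lambda>v. x v $ i $ i))"
    using minimiser_chi_d_le[OF x x_min] chi_d_diag_array_le[OF x] sum_diag_entries_le_chi_d[OF x]
      x_min[OF diag_array_in_SymV]
    unfolding chi_d_diag_array by argo
  then have eq: "chi_1 E (m i) = chi_1 E (\<lambda>v. x v $ i $ i)"
    by (rule sum_mono_inv) (use scalar_minimiser_le diag_entries_in_RV[OF x] in auto)
  have "\<forall>y\<in>RV V \<Gamma> (\<lambda>v. z v $ i $ i). chi_1 E (\<lambda>v. x v $ i $ i) \<le> chi_1 E y"
    using scalar_minimiser_le unfolding eq[symmetric] by blast
  then show ?thesis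
    using scalar_minimiser[of i] diag_entries_in_RV[OF x] unfolding unique_minimiser_def by blast
qed

lemma minimiser_diag:
  assumes x: "x \<in> SymV V \<Gamma> z" and x_min: "\<And>y. y \<in> SymV V \<Gamma> z \<Longrightarrow> chi_d E x \<le> chi_d E y"
    and "v \<in> V"
  shows "diag_mat (x v)"
proof (rule diag_mat_if_edge_diffs_diag[OF _ _ \<open>v \<in> V\<close>])
  show "diag_mat (x u)" if "u \<in> \<Gamma>" for u using x boundary_diag that by (simp add: SymV_def)
  show "diag_mat (x u - x w)" if "(u, w) \<in> E" for u w
    using finite_edges SymV_edge_sym[OF x] minimiser_chi_d_le[OF x x_min] that
    by (rule diag_mat_diff_if_chi_d_le)
qed

lemma minimiser_eq_diag_array:
  assumes x: "x \<in> SymV V \<Gamma> z" and x_min: "\<And>y. y \<in> SymV V \<Gamma> z \<Longrightarrow> chi_d E x \<le> chi_d E y"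
  shows "x = diag_array m"
proof
  fix v
  show "x v = diag_array m v"
  proof (cases "v \<in> V")
    case True
    then show ?thesis
      using minimiser_diag[OF x x_min True] minimiser_diag_entries[OF x x_min]
      by (auto simp: diag_array_def diag_mat_def vec_eq_iff fun_eq_iff)
  next
    case False
    then show ?thesis using x diag_array_in_SymV by (simp add: SymV_def)
  qed
qed

lemma diag_array_unique_minimiser: "unique_minimiser (chi_d E) (SymV V \<Gamma> z) (diag_array m)"
  unfolding unique_minimiser_def
  using diag_array_in_SymV diag_array_minimises minimiser_eq_diag_array by blast

end

theorem mainTheorem16:
  fixes V \<Gamma> :: "'v set" and E :: "('v \<times> 'v) set"
    and z :: "'v \<Rightarrow> real^'d^'d"
  assumes "finite V" and "E \<subseteq> V \<times> V" and "acyclic E"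
    and "\<Gamma> \<subseteq> V"
    and "\<And>v. is_sink V E v \<Longrightarrow> v \<in> \<Gamma>"
    and "\<And>v. is_source V E v \<Longrightarrow> v \<in> \<Gamma>"
    and "V - \<Gamma> \<noteq> {}"
    and "\<And>v. v \<in> \<Gamma> \<Longrightarrow> diag_mat (z v)"
  shows "\<exists>m :: 'd \<Rightarrow> 'v \<Rightarrow> real.
           (\<forall>i. unique_minimiser (chi_1 E) (RV V \<Gamma> (\<lambda>v. z v $ i $ i)) (m i)) \<and>
           unique_minimiser (chi_d E) (SymV V \<Gamma> z)
             (\<lambda>v. \<chi> i j. if i = j then m i v else 0)"
proof -
  interpret boundary_dag V \<Gamma> E
    using assms(1-6) by unfold_locales
  have "\<forall>i. \<exists>mi. unique_minimiser (chi_1 E) (RV V \<Gamma> (\<lambda>v. z v $ i $ i)) mi"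
    using chi_1_unique_minimiser by blast
  then obtain m where m: "\<forall>i. unique_minimiser (chi_1 E) (RV V \<Gamma> (\<lambda>v. z v $ i $ i)) (m i)"
    by (rule choice[THEN exE])
  interpret diagonal_boundary_problem V \<Gamma> E z m
    using assms(8) m by unfold_locales auto
  from m diag_array_unique_minimiser show ?thesis
    unfolding diag_array_def[abs_def] by (intro exI[of _ m]) simp
qed

end
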